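(* Let $f,g:\mathbb{R}^n\to[0,+\infty)$ and $h_1,h_2:\mathbb{R}^n\to\mathbb{R}$, let $C\subseteq\mathbb{R}^n$ be closed and convex, $\Omega:=\{x:g(x)\neq0\}$, $C\cap\Omega\neq\emptyset$, and assume: $f$ is convex; $g$ is differentiable with locally Lipschitz gradient; $h_1$ is differentiable with locally Lipschitz gradient; $h_2$ is convex. Let $F$, $H$ and Algorithm 1 be as in the context, run with parameters $x^0\in\mathrm{dom}F$, $0<\underline{\alpha}<\overline{\alpha}$, $\sigma>0$, $0<r<1$, and assume the level set $\mathcal{X}_0:=\{x\in\mathrm{dom}F:F(x)\le F(x^0)\}$ is compact. Then Algorithm 1 is well defined: there exists $\underline{\alpha}_\sigma>0$ such that for every $k\in\mathbb{N}$ the inner loop (Step 2) terminates after finitely many reductions, at some $\alpha_k\ge\min\{\underline{\alpha},\underline{\alpha}_\sigma\}\,r$. Moreover, the generated sequence $\{x^k:k\in\mathbb{N}\}$ lies in $\mathcal{X}_0\subseteq\Omega\cap C$ and satisfies $$F(x^{k+1})+\frac{\sigma}{2}\|x^{k+1}-x^k\|_2^2\le F(x^k)\quad\text{for all }k\in\mathbb{N}.$$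
   Context: $F(x)=f^2(x)/g(x)+h_1(x)-h_2(x)$ if $x\in\Omega\cap C$, $F(x)=+\infty$ otherwise. $\iota_C$ is the indicator of $C$, $h_2^\star(z)=\sup_x\{\langle x,z\rangle-h_2(x)\}$ is the convex conjugate, $\partial h_2$ is the convex subdifferential, and $\mathrm{prox}_\varphi(y)=\arg\min_x\{\varphi(x)+\frac12\|x-y\|_2^2\}$. Define $H:\mathbb{R}^n\times\mathbb{R}^n\times\mathbb{R}\to(-\infty,+\infty]$ by $H(x,z,c)=2cf(x)+\iota_C(x)-c^2g(x)+h_1(x)+h_2^\star(z)-\langle x,z\rangle$. Algorithm 1: given $x^0\in\mathrm{dom}F$, $0<\underline{\alpha}<\overline{\alpha}$, $\sigma>0$, $0<r<1$, for $k=0,1,2,\dots$: (Step 1) compute $c_k=f(x^k)/g(x^k)$, choose $z^k\in\partial h_2(x^k)$, set $\alpha:=\widetilde{\alpha}_k$ for some $\widetilde{\alpha}_k\in[\underline{\alpha},\overline{\alpha}]$; (Step 2) compute $\widehat{x}^k\in\mathrm{prox}_{2\alpha c_kf+\iota_C}\big(x^k-\alpha(\nabla h_1(x^k)-c_k^2\nabla g(x^k)-z^k)\big)$; if $\widehat{x}^k\in\Omega$ and $H(\widehat{x}^k,z^k,f(\widehat{x}^k)/g(\widehat{x}^k))+\frac{\sigma}{2}\|\widehat{x}^k-x^k\|_2^2\le F(x^k)$, set $x^{k+1}=\widehat{x}^k$ and $\alpha_k:=\alpha$ and go to the next $k$; otherwise set $\alpha:=r\alpha$ and repeat Step 2. 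*)

theory Defs
  imports "HOL-Analysis.Analysis"
begin

definition conv_subdiff :: "('a::real_inner \<Rightarrow> real) \<Rightarrow> 'a \<Rightarrow> 'a set" where
  "conv_subdiff h x = {z. \<forall>y. h y \<ge> h x + inner z (y - x)}"

definition conv_conj :: "('a::real_inner \<Rightarrow> real) \<Rightarrow> 'a \<Rightarrow> ereal" where
  "conv_conj h z = (SUP x. ereal (inner x z - h x))"

definition indic :: "'a set \<Rightarrow> 'a \<Rightarrow> ereal" where
  "indic C x = (if x \<in> C then 0 else \<infinity>)"

definition prox_set :: "('a::real_normed_vector \<Rightarrow> ereal) \<Rightarrow> 'a \<Rightarrow> 'a set" where
  "prox_set \<phi> y = {x. \<forall>u. \<phi> x + ereal (norm (x - y)^2 / 2) \<le> \<phi> u + ereal (norm (u - y)^2 / 2)}"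

definition loc_lipschitz :: "('a::metric_space \<Rightarrow> 'b::metric_space) \<Rightarrow> bool" where
  "loc_lipschitz G \<longleftrightarrow> (\<forall>x. \<exists>e>0. \<exists>L. L-lipschitz_on (ball x e) G)"

definition objF :: "('a \<Rightarrow> real) \<Rightarrow> ('a \<Rightarrow> real) \<Rightarrow> ('a \<Rightarrow> real) \<Rightarrow> ('a \<Rightarrow> real)
    \<Rightarrow> 'a set \<Rightarrow> 'a \<Rightarrow> ereal" where
  "objF f g h1 h2 C x =
     (if g x \<noteq> 0 \<and> x \<in> C then ereal ((f x)^2 / g x + h1 x - h2 x) else \<infinity>)"

definition funH :: "('a::real_inner \<Rightarrow> real) \<Rightarrow> ('a \<Rightarrow> real) \<Rightarrow> ('a \<Rightarrow> real) \<Rightarrow> ('a \<Rightarrow> real)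
    \<Rightarrow> 'a set \<Rightarrow> 'a \<Rightarrow> 'a \<Rightarrow> real \<Rightarrow> ereal" where
  "funH f g h1 h2 C x z c =
     ereal (2 * c * f x) + indic C x - ereal (c^2 * g x) + ereal (h1 x)
       + conv_conj h2 z - ereal (inner x z)"

end

theory Submission
  imports Defs
begin

text \<open>
  Write c = f x / g x at the current iterate x. For every u with g u > 0,
  f(u)^2 / g(u) = 2 c f(u) - c^2 g(u) + (f(u) - c g(u))^2 / g(u), and the last term vanishes to
  second order at u = x; with the Fenchel-Young inequality for h2 this makes H(., z, f/g) an
  upper model of F, which is what the acceptance test compares with F(x).
  On the compact level set, g is bounded away from zero, and on a fixed neighbourhood of it f, h2
  and the gradients are bounded and the gradients Lipschitz. Once alpha is below a threshold
  proportional to the radius, the prox inequality confines the trial point to that neighbourhood;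
  once 1/(2 alpha) dominates the second-order constants, the descent lemma turns the prox
  inequality into sufficient decrease. Both thresholds depend only on the level set, which gives
  alpha_sigma; backtracking therefore stops at a step of at least r min(alpha_lo, alpha_sigma), and
  the decrease keeps the iterates in the level set.
\<close>

lemma loc_lipschitz_imp_continuous_on:
  assumes "loc_lipschitz G"
  shows "continuous_on S G"
proof -
  have "isCont G x" for x
  proof -
    obtain e L where "e > 0" "L-lipschitz_on (ball x e) G"
      using assms unfolding loc_lipschitz_def by blast
    then show ?thesis
      using lipschitz_on_continuous_on continuous_on_interior by fastforce
  qed
  then show ?thesis by (simp add: continuous_at_imp_continuous_on)
qed

lemma loc_lipschitz_imp_lipschitz_on_compact:
  fixes G :: "'a::metric_space \<Rightarrow> 'b::metric_space"
  assumes "loc_lipschitz G" "compact K"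
  obtains L where "L-lipschitz_on K G"
proof -
  have "local_lipschitz {0::real} K (\<lambda>_. G)"
  proof (rule local_lipschitzI)
    fix x assume "x \<in> K"
    obtain e L where "e > 0" "L-lipschitz_on (ball x e) G"
      using assms(1) unfolding loc_lipschitz_def by blast
    then have "L-lipschitz_on (cball x (e/2) \<inter> K) G"
      by (rule_tac lipschitz_on_subset) auto
    then show "\<exists>u>0. \<exists>L. \<forall>t\<in>cball t u \<inter> {0}. L-lipschitz_on (cball x u \<inter> K) G" for t :: real
      using \<open>e > 0\<close> by (intro exI[of _ "e/2"]) auto
  qed
  then obtain L where "\<And>t. t \<in> {0::real} \<Longrightarrow> L-lipschitz_on K G"
    by (rule local_lipschitz_compact_implies_lipschitz[OF _ assms(2)]) auto
  then show ?thesis using that by blast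
qed

lemma convex_on_diff_le_of_bounded:
  fixes f :: "'a::real_normed_vector \<Rightarrow> real"
  assumes f: "convex_on UNIV f" and "\<rho> > 0"
    and bound_x: "\<bar>f x\<bar> \<le> B" and bound_y: "\<And>w. w \<in> cball y \<rho> \<Longrightarrow> \<bar>f w\<bar> \<le> B"
  shows "f y - f x \<le> 2 * B / \<rho> * norm (y - x)"
proof (cases "y = x")
  case False
  define t where "t = norm (y - x)"
  have "t > 0" using False by (simp add: t_def)
  \<comment> \<open>extend the segment from x through y by \<rho> beyond y and use convexity on it\<close>
  define w where "w = y + (\<rho> / t) *\<^sub>R (y - x)"
  define l where "l = t / (t + \<rho>)"
  have l: "0 \<le> l" "l \<le> 1" "l \<le> t / \<rho>"
    using \<open>t > 0\<close> \<open>\<rho> > 0\<close> by (auto simp: l_def field_simps)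
  have "norm (w - y) = \<rho>" using \<open>t > 0\<close> \<open>\<rho> > 0\<close> by (simp add: w_def t_def)
  have "(1 - l) *\<^sub>R x + l *\<^sub>R w = y"
  proof -
    have "l * \<rho> / t = \<rho> / (t + \<rho>)" using \<open>t > 0\<close> by (simp add: l_def)
    moreover have "t / (t + \<rho>) + \<rho> / (t + \<rho>) = 1"
      using \<open>t > 0\<close> \<open>\<rho> > 0\<close> by (simp flip: add_divide_distrib)
    ultimately have coeffs: "1 - l - l * \<rho> / t = 0" "l + l * \<rho> / t = 1" by (simp_all add: l_def)
    have "(1 - l) *\<^sub>R x + l *\<^sub>R w = (1 - l - l * \<rho> / t) *\<^sub>R x + (l + l * \<rho> / t) *\<^sub>R y"
      by (simp add: w_def algebra_simps)
    then show ?thesis unfolding coeffs by simp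
  qed
  then have "f y \<le> (1 - l) * f x + l * f w"
    using convex_onD[OF f, of l x w] l by simp
  then have "f y - f x \<le> l * (f w - f x)" by (simp add: algebra_simps)
  also have "\<dots> \<le> l * (2 * B)"
    using bound_y[of w] \<open>norm (w - y) = \<rho>\<close> bound_x l
    by (intro mult_left_mono) (auto simp: dist_norm norm_minus_commute)
  also have "\<dots> \<le> t / \<rho> * (2 * B)"
    using bound_x l by (intro mult_right_mono) auto
  finally show ?thesis by (simp add: t_def mult.commute)
qed simp

lemma convex_on_abs_diff_le_of_bounded:
  fixes f :: "'a::real_normed_vector \<Rightarrow> real"
  assumes "convex_on UNIV f" "\<rho> > 0"
    and "\<And>w. w \<in> cball x \<rho> \<union> cball y \<rho> \<Longrightarrow> \<bar>f w\<bar> \<le> B"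
  shows "\<bar>f y - f x\<bar> \<le> 2 * B / \<rho> * norm (y - x)"
  using convex_on_diff_le_of_bounded[OF assms(1,2), of x B y]
    convex_on_diff_le_of_bounded[OF assms(1,2), of y B x] assms(2,3)
  by (fastforce simp: norm_minus_commute)

lemma conv_subdiff_norm_le:
  fixes h :: "'a::real_inner \<Rightarrow> real"
  assumes z: "z \<in> conv_subdiff h x" and "\<rho> > 0"
    and bound: "\<And>w. w \<in> cball x \<rho> \<Longrightarrow> \<bar>h w\<bar> \<le> B"
  shows "norm z \<le> 2 * B / \<rho>"
proof (cases "z = 0")
  case True then show ?thesis using bound[of x] \<open>\<rho> > 0\<close> by auto
next
  case False
  define y where "y = x + (\<rho> / norm z) *\<^sub>R z"
  have "h y \<ge> h x + inner z (y - x)" using z by (auto simp: conv_subdiff_def)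
  moreover have "inner z (y - x) = \<rho> * norm z"
    using False by (simp add: y_def power2_norm_eq_inner[symmetric] power2_eq_square)
  moreover have "y \<in> cball x \<rho>" using False \<open>\<rho> > 0\<close> by (simp add: y_def dist_norm)
  ultimately have "\<rho> * norm z \<le> 2 * B" using bound[of y] bound[of x] \<open>\<rho> > 0\<close> by force
  then show ?thesis using \<open>\<rho> > 0\<close> by (simp add: field_simps mult.commute)
qed

lemma conv_conj_ge: "ereal (inner x z - h x) \<le> conv_conj h z"
  unfolding conv_conj_def by (rule SUP_upper) simp

lemma conv_conj_eq_of_conv_subdiff:
  assumes "z \<in> conv_subdiff h x"
  shows "conv_conj h z = ereal (inner x z - h x)"
proof (rule antisym)
  have "ereal (inner y z - h y) \<le> ereal (inner x z - h x)" for y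
  proof -
    have "h y \<ge> h x + inner z (y - x)" using assms by (simp add: conv_subdiff_def)
    then show ?thesis by (simp add: inner_diff_right inner_commute)
  qed
  then show "conv_conj h z \<le> ereal (inner x z - h x)"
    unfolding conv_conj_def by (rule SUP_least)
qed (rule conv_conj_ge)

lemma lipschitz_gradient_remainder_le:
  fixes h :: "'a::real_inner \<Rightarrow> real"
  assumes der: "\<And>u. (h has_derivative (\<lambda>v. inner (Dh u) v)) (at u)"
    and lip: "L-lipschitz_on (cball x (norm (y - x))) Dh"
  shows "\<bar>h y - h x - inner (Dh x) (y - x)\<bar> \<le> L * (norm (y - x))^2"
proof -
  define S where "S = cball x (norm (y - x))"
  have "L \<ge> 0" using lip lipschitz_on_nonneg by blast
  have "norm ((h y - inner (Dh x) y) - (h x - inner (Dh x) x)) \<le> (L * norm (y - x)) * norm (y - x)"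
  proof (rule differentiable_bound[where f'="\<lambda>u v. inner (Dh u - Dh x) v"])
    fix u assume u: "u \<in> S"
    have "((\<lambda>u. h u - inner (Dh x) u) has_derivative (\<lambda>v. inner (Dh u) v - inner (Dh x) v)) (at u)"
      by (intro derivative_intros der)
    then show "((\<lambda>u. h u - inner (Dh x) u) has_derivative (\<lambda>v. inner (Dh u - Dh x) v)) (at u within S)"
      by (auto simp: inner_diff_left intro: has_derivative_at_withinI)
    have "onorm (\<lambda>v. inner (Dh u - Dh x) v) \<le> norm (Dh u - Dh x)"
      by (rule onorm_bound) (auto simp: Cauchy_Schwarz_ineq2)
    also have "\<dots> \<le> L * dist u x"
      using lipschitz_onD[OF lip, of u x] u by (auto simp: S_def dist_norm)
    also have "\<dots> \<le> L * norm (y - x)"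
      using u \<open>L \<ge> 0\<close> by (intro mult_left_mono) (auto simp: S_def dist_norm norm_minus_commute)
    finally show "onorm (\<lambda>v. inner (Dh u - Dh x) v) \<le> L * norm (y - x)" .
  qed (auto simp: S_def dist_norm norm_minus_commute)
  then show ?thesis by (simp add: inner_diff_right power2_eq_square algebra_simps)
qed

lemma le_of_square_le_affine:
  fixes t a b \<rho> :: real
  assumes "t \<ge> 0" "\<rho> \<ge> 0" "t^2 \<le> a + b * t" "2 * b \<le> \<rho>" "2 * a \<le> \<rho>^2"
  shows "t \<le> \<rho>"
proof (rule ccontr)
  assume "\<not> t \<le> \<rho>"
  then have "b * t \<le> t / 2 * t" using assms by (intro mult_right_mono) auto
  then have "t^2 \<le> \<rho>^2" using assms by (simp add: power2_eq_square)
  then show False using \<open>\<not> t \<le> \<rho>\<close> assms by (simp add: power_mono_iff abs_le_square_iff)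
qed

lemma square_div_le_linearization:
  fixes p q p0 q0 c a b Cb \<gamma> t :: real
  assumes "0 < \<gamma>" "\<gamma> \<le> q" "p0 = c * q0" "0 \<le> c" "c \<le> Cb" "0 \<le> b"
    and "\<bar>p - p0\<bar> \<le> a * t" "\<bar>q - q0\<bar> \<le> b * t"
  shows "p^2 / q \<le> 2 * c * p - c^2 * q + (a + Cb * b)^2 / \<gamma> * t^2"
proof -
  have "q > 0" using assms by simp
  have "p - c * q = (p - p0) - c * (q - q0)" using assms(3) by (simp add: algebra_simps)
  then have "\<bar>p - c * q\<bar> \<le> \<bar>p - p0\<bar> + \<bar>c * (q - q0)\<bar>" by (metis abs_triangle_ineq4)
  also have "\<bar>c * (q - q0)\<bar> = c * \<bar>q - q0\<bar>" using assms(4) by (simp add: abs_mult)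
  also have "\<bar>p - p0\<bar> + c * \<bar>q - q0\<bar> \<le> a * t + Cb * (b * t)"
    using assms by (intro add_mono mult_mono) auto
  finally have "(p - c * q)^2 \<le> ((a + Cb * b) * t)^2"
    by (intro power2_le_iff_abs_le[THEN iffD2]) (auto simp: algebra_simps)
  then have "(p - c * q)^2 / q \<le> ((a + Cb * b) * t)^2 / q"
    using \<open>q > 0\<close> by (simp add: divide_right_mono)
  also have "\<dots> \<le> ((a + Cb * b) * t)^2 / \<gamma>"
    using assms \<open>q > 0\<close> by (intro divide_left_mono) auto
  finally have "(p - c * q)^2 / q \<le> ((a + Cb * b) * t)^2 / \<gamma>" .
  moreover have "p^2 / q = 2 * c * p - c^2 * q + (p - c * q)^2 / q"
    using \<open>q > 0\<close> by (simp add: field_simps power2_eq_square)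
  ultimately show ?thesis by (simp add: power_mult_distrib)
qed

lemma uniformly_positive_near_compact:
  fixes g :: "'a::metric_space \<Rightarrow> real"
  assumes "continuous_on UNIV g" "compact K" "\<forall>x\<in>K. 0 < g x"
  obtains \<gamma> e where "0 < \<gamma>" "0 < e" "\<And>u. u \<in> (\<Union>x\<in>K. cball x e) \<Longrightarrow> \<gamma> \<le> g u"
proof (cases "K = {}")
  case False
  obtain xm where "xm \<in> K" and min: "\<And>y. y \<in> K \<Longrightarrow> g xm \<le> g y"
    using continuous_attains_inf[OF assms(2) False continuous_on_subset[OF assms(1)]] by auto
  define \<gamma> where "\<gamma> = g xm / 2"
  have "0 < \<gamma>" using assms(3) \<open>xm \<in> K\<close> by (simp add: \<gamma>_def)
  have "open {u. \<gamma> < g u}" by (rule open_Collect_less[OF continuous_on_const assms(1)])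
  moreover have "K \<subseteq> {u. \<gamma> < g u}" using min assms(3) \<open>xm \<in> K\<close> by (force simp: \<gamma>_def)
  ultimately obtain e where "0 < e" "(\<Union>x\<in>K. cball x e) \<subseteq> {u. \<gamma> < g u}"
    using compact_subset_open_imp_cball_epsilon_subset[OF assms(2)] by metis
  then show ?thesis using that[OF \<open>0 < \<gamma>\<close>] by force
qed (use that[of 1 1] in auto)

lemma prox_set_indic_ineq:
  fixes x v :: "'a::real_inner"
  assumes prox: "xh \<in> prox_set (\<lambda>u. ereal (a * f u) + indic C u) (x - \<alpha> *\<^sub>R v)" and "x \<in> C"
  shows "xh \<in> C" "a * f xh + (norm (xh - x))^2 / 2 + \<alpha> * inner (xh - x) v \<le> a * f x"
proof -
  have min: "ereal (a * f xh) + indic C xh + ereal (norm (xh - (x - \<alpha> *\<^sub>R v))^2 / 2)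
      \<le> ereal (a * f x) + indic C x + ereal (norm (x - (x - \<alpha> *\<^sub>R v))^2 / 2)"
    using prox unfolding prox_set_def by blast
  show "xh \<in> C"
  proof (rule ccontr)
    assume "xh \<notin> C"
    then show False using min \<open>x \<in> C\<close> by (simp add: indic_def)
  qed
  moreover have "norm (xh - (x - \<alpha> *\<^sub>R v))^2 = norm (xh - x)^2 + 2 * \<alpha> * inner (xh - x) v + norm (\<alpha> *\<^sub>R v)^2"
    using dot_norm[of "xh - x" "\<alpha> *\<^sub>R v"] by (simp add: algebra_simps)
  ultimately show "a * f xh + (norm (xh - x))^2 / 2 + \<alpha> * inner (xh - x) v \<le> a * f x"
    using min \<open>x \<in> C\<close> by (simp add: indic_def field_simps)
qed

lemma backtracking_terminates:
  fixes P :: "nat \<Rightarrow> bool" and a alo a\<sigma> r :: real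
  assumes accept: "\<And>m. a * r^m \<le> a\<sigma> \<Longrightarrow> P m"
    and "0 < alo" "alo \<le> a" "0 < a\<sigma>" "0 < r" "r < 1"
  shows "\<exists>m. P m" "min alo a\<sigma> * r \<le> a * r ^ (LEAST m. P m)"
proof -
  obtain m where "r^m < a\<sigma> / a" using real_arch_pow_inv[of "a\<sigma> / a" r] assms by auto
  then have "a * r^m \<le> a\<sigma>" using assms by (simp add: field_simps)
  then show "\<exists>m. P m" using accept by blast
  show "min alo a\<sigma> * r \<le> a * r ^ (LEAST m. P m)"
  proof (cases "(LEAST m. P m)")
    case 0
    have "min alo a\<sigma> * r \<le> alo * 1" using assms by (intro mult_mono) auto
    then show ?thesis using 0 assms by simp
  next
    case (Suc j)
    then have "\<not> P j" by (metis lessI not_less_Least)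
    then have "a\<sigma> < a * r^j" using accept by force
    then have "min alo a\<sigma> * r \<le> a * r^j * r" using assms by (simp add: min_le_iff_disj)
    then show ?thesis using Suc by (simp add: ac_simps)
  qed
qed

text \<open>
  Step 2 of Algorithm 1 at the iterate x, with c = f x / g x, subgradient z and trial step alpha:
  the admissible proximal points, and the acceptance test for one of them.
\<close>

definition prox_step_set ::
    "('a::real_inner \<Rightarrow> real) \<Rightarrow> ('a \<Rightarrow> real) \<Rightarrow> ('a \<Rightarrow> 'a) \<Rightarrow> ('a \<Rightarrow> 'a) \<Rightarrow> 'a set
      \<Rightarrow> real \<Rightarrow> 'a \<Rightarrow> 'a \<Rightarrow> 'a set" where
  "prox_step_set f g Dg Dh1 C \<alpha> x z =
     prox_set (\<lambda>u. ereal (2 * \<alpha> * (f x / g x) * f u) + indic C u)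
       (x - \<alpha> *\<^sub>R (Dh1 x - (f x / g x)^2 *\<^sub>R Dg x - z))"

definition step_accepted ::
    "('a::real_inner \<Rightarrow> real) \<Rightarrow> ('a \<Rightarrow> real) \<Rightarrow> ('a \<Rightarrow> real) \<Rightarrow> ('a \<Rightarrow> real) \<Rightarrow> 'a set
      \<Rightarrow> real \<Rightarrow> 'a \<Rightarrow> 'a \<Rightarrow> 'a \<Rightarrow> bool" where
  "step_accepted f g h1 h2 C \<sigma> x z xh \<longleftrightarrow> g xh \<noteq> 0 \<and>
     funH f g h1 h2 C xh z (f xh / g xh) + ereal (\<sigma> / 2 * (norm (xh - x))^2) \<le> objF f g h1 h2 C x"

definition accepts_steps_upto ::
    "('a::real_inner \<Rightarrow> real) \<Rightarrow> ('a \<Rightarrow> real) \<Rightarrow> ('a \<Rightarrow> real) \<Rightarrow> ('a \<Rightarrow> real) \<Rightarrow> ('a \<Rightarrow> 'a)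
      \<Rightarrow> ('a \<Rightarrow> 'a) \<Rightarrow> 'a set \<Rightarrow> real \<Rightarrow> real \<Rightarrow> 'a \<Rightarrow> bool" where
  "accepts_steps_upto f g h1 h2 Dg Dh1 C \<sigma> a x \<longleftrightarrow>
     (\<forall>z \<in> conv_subdiff h2 x. \<forall>\<alpha> \<in> {0<..a}. \<forall>xh \<in> prox_step_set f g Dg Dh1 C \<alpha> x z.
        step_accepted f g h1 h2 C \<sigma> x z xh)"

lemma objF_neq_infinity_iff: "objF f g h1 h2 C x \<noteq> \<infinity> \<longleftrightarrow> g x \<noteq> 0 \<and> x \<in> C"
  by (simp add: objF_def)

lemma objF_le_funH:
  assumes "xh \<in> C" "g xh \<noteq> 0"
  shows "objF f g h1 h2 C xh \<le> funH f g h1 h2 C xh z (f xh / g xh)"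
proof -
  have quotient: "2 * (f xh / g xh) * f xh - (f xh / g xh)^2 * g xh = (f xh)^2 / g xh"
    using assms(2) by (simp add: field_simps power2_eq_square)
  show ?thesis
    using conv_conj_ge[of xh z h2] quotient assms
    by (cases "conv_conj h2 z") (auto simp: funH_def objF_def indic_def)
qed

lemma step_accepted_of_real_ineq:
  assumes "z \<in> conv_subdiff h2 x" "x \<in> C" "g x \<noteq> 0" "xh \<in> C" "g xh \<noteq> 0"
    and "(f xh)^2 / g xh + h1 xh - inner xh z + \<sigma> / 2 * (norm (xh - x))^2
      \<le> (f x)^2 / g x + h1 x - inner x z"
  shows "step_accepted f g h1 h2 C \<sigma> x z xh"
proof -
  have "2 * (f xh / g xh) * f xh - (f xh / g xh)^2 * g xh = (f xh)^2 / g xh"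
    using assms(5) by (simp add: field_simps power2_eq_square)
  then show ?thesis
    using assms by (simp add: step_accepted_def funH_def objF_def indic_def inner_commute
        conv_conj_eq_of_conv_subdiff)
qed

lemma prox_step_short:
  fixes x z xh :: "'a::real_inner"
  assumes f_nonneg: "\<forall>u. 0 \<le> f u" and "x \<in> C" "0 < g x"
    and prox: "xh \<in> prox_step_set f g Dg Dh1 C \<alpha> x z"
    and P: "(f x)^2 / g x \<le> P" and V: "norm (Dh1 x - (f x / g x)^2 *\<^sub>R Dg x - z) \<le> V"
    and "0 < \<alpha>" "0 \<le> \<rho>" "4 * \<alpha> * V \<le> \<rho>" "8 * \<alpha> * P \<le> \<rho>^2"
  shows "norm (xh - x) \<le> \<rho>"
proof -
  define c where "c = f x / g x"
  define v where "v = Dh1 x - c^2 *\<^sub>R Dg x - z"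
  define t where "t = norm (xh - x)"
  have prox_ineq: "2 * \<alpha> * c * f xh + t^2 / 2 + \<alpha> * inner (xh - x) v \<le> 2 * \<alpha> * c * f x"
    using prox_set_indic_ineq(2)[OF prox[unfolded prox_step_set_def] \<open>x \<in> C\<close>]
    by (simp add: c_def v_def t_def)
  have "0 \<le> 2 * \<alpha> * c * f xh" using f_nonneg \<open>0 < \<alpha>\<close> \<open>0 < g x\<close> by (simp add: c_def)
  moreover have "\<alpha> * (c * f x) \<le> \<alpha> * P"
    using mult_left_mono[OF P, of \<alpha>] \<open>0 < \<alpha>\<close> by (simp add: c_def power2_eq_square)
  moreover have "\<alpha> * - inner (xh - x) v \<le> \<alpha> * (V * t)"
  proof (rule mult_left_mono)
    have "- inner (xh - x) v \<le> t * norm v"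
      using Cauchy_Schwarz_ineq2[of "xh - x" v] by (simp add: t_def abs_le_iff)
    also have "\<dots> \<le> V * t"
      using mult_left_mono[OF V, of t] by (simp add: t_def v_def c_def mult.commute)
    finally show "- inner (xh - x) v \<le> V * t" .
  qed (use \<open>0 < \<alpha>\<close> in simp)
  ultimately have "t^2 \<le> 4 * \<alpha> * P + 2 * \<alpha> * V * t"
    using prox_ineq by (simp add: algebra_simps)
  then show ?thesis
    using le_of_square_le_affine[of t \<rho> "4 * \<alpha> * P" "2 * \<alpha> * V"] assms
    by (simp add: t_def algebra_simps)
qed

lemma sufficient_decrease_of_estimates:
  fixes f g h :: "'a::real_inner \<Rightarrow> real" and Dg Dh :: "'a \<Rightarrow> 'a" and x xh z :: 'a
  defines "c \<equiv> f x / g x" and "d \<equiv> xh - x"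
  assumes "0 < g x" "0 \<le> c" "c \<le> Cb" "0 \<le> L" "0 < \<alpha>"
    and prox: "2 * c * f xh + (norm d)^2 / (2 * \<alpha>) + inner d (Dh x - c^2 *\<^sub>R Dg x - z) \<le> 2 * c * f x"
    and quotient: "(f xh)^2 / g xh \<le> 2 * c * f xh - c^2 * g xh + M * (norm d)^2"
    and h_upper: "h xh \<le> h x + inner (Dh x) d + L * (norm d)^2"
    and g_lower: "g x + inner (Dg x) d - L * (norm d)^2 \<le> g xh"
    and step: "2 * \<alpha> * (L + Cb^2 * L + M + \<sigma> / 2) \<le> 1"
  shows "(f xh)^2 / g xh + h xh - inner xh z + \<sigma> / 2 * (norm d)^2 \<le> (f x)^2 / g x + h x - inner x z"
proof -
  define n where "n = (norm d)^2"
  define Q where "Q = L + Cb^2 * L + M"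
  have g_lin: "- (c^2 * g xh) \<le> - (c^2 * g x) - c^2 * inner (Dg x) d + Cb^2 * L * n"
  proof -
    have "c^2 * (g x + inner (Dg x) d - L * n) \<le> c^2 * g xh"
      using g_lower by (intro mult_left_mono) (auto simp: n_def)
    moreover have "c^2 * (L * n) \<le> Cb^2 * (L * n)"
      using assms(4-6) by (intro mult_right_mono power_mono) (auto simp: n_def)
    ultimately show ?thesis by (simp add: algebra_simps)
  qed
  \<comment> \<open>the prox inequality gains n / (2 alpha), which absorbs every second-order error term\<close>
  have "Q + \<sigma> / 2 \<le> 1 / (2 * \<alpha>)"
    using step \<open>0 < \<alpha>\<close> unfolding Q_def by (simp add: pos_le_divide_eq mult.commute)
  then have threshold: "Q * n + \<sigma> / 2 * n \<le> n / (2 * \<alpha>)"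
    using mult_right_mono[of "Q + \<sigma> / 2" "1 / (2 * \<alpha>)" n] by (simp add: n_def algebra_simps)
  have inner_d: "inner xh z = inner x z + inner d z"
    "inner d (Dh x - c^2 *\<^sub>R Dg x - z) = inner (Dh x) d - c^2 * inner (Dg x) d - inner d z"
    by (simp_all add: d_def inner_diff_left inner_diff_right inner_commute)
  have Q_n: "Q * n = L * n + Cb^2 * L * n + M * n"
    by (simp add: Q_def algebra_simps)
  have "(f xh)^2 / g xh + h xh - inner xh z
      \<le> 2 * c * f xh - c^2 * g xh + M * n + (h x + inner (Dh x) d + L * n) - inner xh z"
    using quotient h_upper by (simp add: n_def)
  also have "\<dots> \<le> 2 * c * f xh + inner d (Dh x - c^2 *\<^sub>R Dg x - z) - c^2 * g x + h x - inner x z + Q * n"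
    using g_lin inner_d Q_n by linarith
  also have "\<dots> \<le> 2 * c * f x - c^2 * g x + h x - inner x z - \<sigma> / 2 * n"
    using prox threshold by (simp add: n_def)
  also have "2 * c * f x - c^2 * g x = (f x)^2 / g x"
    using \<open>0 < g x\<close> by (simp add: c_def field_simps power2_eq_square)
  finally show ?thesis by (simp add: n_def)
qed

locale fractional_data_bounded_on =
  fixes f g h1 h2 :: "'a::real_inner \<Rightarrow> real" and Dg Dh1 :: "'a \<Rightarrow> 'a"
    and N :: "'a set" and B \<gamma> L :: real
  assumes f_nonneg: "\<forall>u. 0 \<le> f u" and f_convex: "convex_on UNIV f"
    and g_grad: "\<forall>u. (g has_derivative (\<lambda>v. inner (Dg u) v)) (at u)"
    and h1_grad: "\<forall>u. (h1 has_derivative (\<lambda>v. inner (Dh1 u) v)) (at u)"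
    and B_pos: "0 < B" and \<gamma>_pos: "0 < \<gamma>"
    and f_bound: "\<And>u. u \<in> N \<Longrightarrow> \<bar>f u\<bar> \<le> B" and h2_bound: "\<And>u. u \<in> N \<Longrightarrow> \<bar>h2 u\<bar> \<le> B"
    and Dh1_bound: "\<And>u. u \<in> N \<Longrightarrow> norm (Dh1 u) \<le> B"
    and Dg_bound: "\<And>u. u \<in> N \<Longrightarrow> norm (Dg u) \<le> B"
    and g_lower: "\<And>u. u \<in> N \<Longrightarrow> \<gamma> \<le> g u"
    and Dh1_lip: "L-lipschitz_on N Dh1" and Dg_lip: "L-lipschitz_on N Dg"
begin

lemma L_nonneg: "0 \<le> L"
  using Dg_lip lipschitz_on_nonneg by blast

lemma quotient_bounds:
  assumes "x \<in> N"
  shows "0 < g x" "0 \<le> f x / g x" "f x / g x \<le> B / \<gamma>" "(f x)^2 / g x \<le> B^2 / \<gamma>"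
proof -
  show "0 < g x" using g_lower[OF assms] \<gamma>_pos by linarith
  show c: "0 \<le> f x / g x" "f x / g x \<le> B / \<gamma>"
    using f_nonneg[rule_format, of x] f_bound[OF assms] g_lower[OF assms] \<gamma>_pos B_pos
    by (auto intro!: frac_le)
  have "f x / g x * f x \<le> B / \<gamma> * B"
    using c f_bound[OF assms] f_nonneg B_pos by (intro mult_mono) auto
  then show "(f x)^2 / g x \<le> B^2 / \<gamma>" by (simp add: power2_eq_square)
qed

lemma prox_direction_norm_le:
  assumes "cball x (2 * \<rho>) \<subseteq> N" "0 < \<rho>" "z \<in> conv_subdiff h2 x"
  shows "norm (Dh1 x - (f x / g x)^2 *\<^sub>R Dg x - z) \<le> B + (B / \<gamma>)^2 * B + B / \<rho>"
proof -
  have "x \<in> N" using assms by auto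
  have "norm z \<le> 2 * B / (2 * \<rho>)"
    by (rule conv_subdiff_norm_le[OF assms(3)]) (use assms h2_bound in auto)
  moreover have "(f x / g x)^2 * norm (Dg x) \<le> (B / \<gamma>)^2 * B"
    using quotient_bounds[OF \<open>x \<in> N\<close>] Dg_bound[OF \<open>x \<in> N\<close>] by (intro mult_mono power_mono) auto
  ultimately show ?thesis
    using norm_triangle_ineq4[of "Dh1 x - (f x / g x)^2 *\<^sub>R Dg x" z]
      norm_triangle_ineq4[of "Dh1 x" "(f x / g x)^2 *\<^sub>R Dg x"] Dh1_bound[OF \<open>x \<in> N\<close>]
    by simp
qed

lemma short_step_estimates:
  assumes short: "norm (xh - x) \<le> \<rho>" and N: "cball x (2 * \<rho>) \<subseteq> N" and "0 < \<rho>"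
  shows "h1 xh \<le> h1 x + inner (Dh1 x) (xh - x) + L * (norm (xh - x))^2"
    and "g x + inner (Dg x) (xh - x) - L * (norm (xh - x))^2 \<le> g xh"
    and "(f xh)^2 / g xh \<le> 2 * (f x / g x) * f xh - (f x / g x)^2 * g xh
          + (2 * B / \<rho> + B / \<gamma> * (B + L * \<rho>))^2 / \<gamma> * (norm (xh - x))^2"
proof -
  have "cball xh \<rho> \<subseteq> N"
  proof
    fix u assume "u \<in> cball xh \<rho>"
    then have "dist x u \<le> 2 * \<rho>"
      using dist_triangle[of x u xh] short by (simp add: dist_norm norm_minus_commute)
    then show "u \<in> N" using N by auto
  qed
  moreover have "cball x (norm (xh - x)) \<subseteq> N" "cball x \<rho> \<subseteq> N"
    using N short \<open>0 < \<rho>\<close> by force+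
  ultimately have balls: "cball x (norm (xh - x)) \<subseteq> N" "cball x \<rho> \<union> cball xh \<rho> \<subseteq> N" by auto
  then have "x \<in> N" "xh \<in> N" using \<open>0 < \<rho>\<close> by auto
  have h1_taylor: "\<bar>h1 xh - h1 x - inner (Dh1 x) (xh - x)\<bar> \<le> L * (norm (xh - x))^2"
    using lipschitz_gradient_remainder_le[of h1 Dh1 L x xh] h1_grad
      lipschitz_on_subset[OF Dh1_lip balls(1)] by simp
  then show "h1 xh \<le> h1 x + inner (Dh1 x) (xh - x) + L * (norm (xh - x))^2" by (simp add: abs_le_iff)
  have g_taylor: "\<bar>g xh - g x - inner (Dg x) (xh - x)\<bar> \<le> L * (norm (xh - x))^2"
    using lipschitz_gradient_remainder_le[of g Dg L x xh] g_grad
      lipschitz_on_subset[OF Dg_lip balls(1)] by simp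
  then show "g x + inner (Dg x) (xh - x) - L * (norm (xh - x))^2 \<le> g xh" by (simp add: abs_le_iff)
  have f_diff: "\<bar>f xh - f x\<bar> \<le> 2 * B / \<rho> * norm (xh - x)"
    using balls f_bound by (intro convex_on_abs_diff_le_of_bounded[OF f_convex \<open>0 < \<rho>\<close>]) blast
  have g_diff: "\<bar>g xh - g x\<bar> \<le> (B + L * \<rho>) * norm (xh - x)"
  proof -
    have "\<bar>inner (Dg x) (xh - x)\<bar> \<le> B * norm (xh - x)"
      using Cauchy_Schwarz_ineq2[of "Dg x" "xh - x"] Dg_bound[OF \<open>x \<in> N\<close>]
      by (meson mult_right_mono norm_ge_zero order_trans)
    moreover have "L * (norm (xh - x))^2 \<le> L * \<rho> * norm (xh - x)"
      using short L_nonneg by (simp add: power2_eq_square mult_left_mono mult_right_mono mult.assoc)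
    ultimately show ?thesis using g_taylor by (simp add: algebra_simps)
  qed
  have "f x = f x / g x * g x" using quotient_bounds(1)[OF \<open>x \<in> N\<close>] by simp
  then show "(f xh)^2 / g xh \<le> 2 * (f x / g x) * f xh - (f x / g x)^2 * g xh
      + (2 * B / \<rho> + B / \<gamma> * (B + L * \<rho>))^2 / \<gamma> * (norm (xh - x))^2"
    using square_div_le_linearization[OF \<gamma>_pos g_lower[OF \<open>xh \<in> N\<close>] _ quotient_bounds(2,3)[OF \<open>x \<in> N\<close>]
        _ f_diff g_diff] B_pos L_nonneg \<open>0 < \<rho>\<close>
    by simp
qed

lemma step_accepted_of_short_step:
  assumes "x \<in> C" and z: "z \<in> conv_subdiff h2 x"
    and prox: "xh \<in> prox_step_set f g Dg Dh1 C \<alpha> x z"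
    and short: "norm (xh - x) \<le> \<rho>" and N: "cball x (2 * \<rho>) \<subseteq> N" and "0 < \<rho>" "0 < \<alpha>"
    and step: "2 * \<alpha> * (L + (B / \<gamma>)^2 * L + (2 * B / \<rho> + B / \<gamma> * (B + L * \<rho>))^2 / \<gamma> + \<sigma> / 2) \<le> 1"
  shows "step_accepted f g h1 h2 C \<sigma> x z xh"
proof -
  have "x \<in> N" "xh \<in> N" using N short \<open>0 < \<rho>\<close> by (auto simp: dist_norm norm_minus_commute)
  note prox_ineq = prox_set_indic_ineq[OF prox[unfolded prox_step_set_def] \<open>x \<in> C\<close>]
  have "2 * (f x / g x) * f xh + (norm (xh - x))^2 / (2 * \<alpha>)
      + inner (xh - x) (Dh1 x - (f x / g x)^2 *\<^sub>R Dg x - z) \<le> 2 * (f x / g x) * f x"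
    using prox_ineq(2) \<open>0 < \<alpha>\<close> by (simp add: field_simps)
  then have "(f xh)^2 / g xh + h1 xh - inner xh z + \<sigma> / 2 * (norm (xh - x))^2
      \<le> (f x)^2 / g x + h1 x - inner x z"
    using sufficient_decrease_of_estimates[where f = f and g = g and h = h1 and Dg = Dg and Dh = Dh1
        and x = x and xh = xh and z = z, OF quotient_bounds(1-3)[OF \<open>x \<in> N\<close>] L_nonneg \<open>0 < \<alpha>\<close>]
      short_step_estimates[OF short N \<open>0 < \<rho>\<close>] step
    by blast
  moreover have "g x \<noteq> 0" "g xh \<noteq> 0" using quotient_bounds(1) \<open>x \<in> N\<close> \<open>xh \<in> N\<close> by force+
  ultimately show ?thesis
    by (intro step_accepted_of_real_ineq[OF z \<open>x \<in> C\<close>] prox_ineq(1))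
qed

lemma uniform_step_acceptance_of_bounds:
  assumes "0 \<le> \<sigma>" "0 < \<rho>"
  shows "\<exists>a\<sigma>>0. \<forall>x \<in> C. cball x (2 * \<rho>) \<subseteq> N \<longrightarrow> accepts_steps_upto f g h1 h2 Dg Dh1 C \<sigma> a\<sigma> x"
proof -
  define V where "V = B + (B / \<gamma>)^2 * B + B / \<rho>"
  define P where "P = B^2 / \<gamma>"
  define Q where "Q = L + (B / \<gamma>)^2 * L + (2 * B / \<rho> + B / \<gamma> * (B + L * \<rho>))^2 / \<gamma> + \<sigma> / 2"
  \<comment> \<open>the first two bounds keep the trial point within \<rho> of x, the third gives the decrease\<close>
  define a\<sigma> where "a\<sigma> = min (\<rho> / (4 * V)) (min (\<rho>^2 / (8 * P)) (1 / (2 * Q)))"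
  have "0 < V" "0 < P" using B_pos \<gamma>_pos \<open>0 < \<rho>\<close> by (simp_all add: V_def P_def add_pos_nonneg)
  moreover have "0 < Q"
  proof -
    have "0 < 2 * B / \<rho> + B / \<gamma> * (B + L * \<rho>)"
      using B_pos \<gamma>_pos L_nonneg \<open>0 < \<rho>\<close> by (intro add_pos_nonneg) auto
    then have "0 < (2 * B / \<rho> + B / \<gamma> * (B + L * \<rho>))^2 / \<gamma>" using \<gamma>_pos by simp
    moreover have "0 \<le> (B / \<gamma>)^2 * L" using L_nonneg by simp
    ultimately show ?thesis using L_nonneg \<open>0 \<le> \<sigma>\<close> unfolding Q_def by linarith
  qed
  ultimately have "0 < a\<sigma>" using \<open>0 < \<rho>\<close> by (simp add: a\<sigma>_def)
  moreover have "step_accepted f g h1 h2 C \<sigma> x z xh"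
    if "x \<in> C" "cball x (2 * \<rho>) \<subseteq> N" "z \<in> conv_subdiff h2 x" "0 < \<alpha>" "\<alpha> \<le> a\<sigma>"
      and prox: "xh \<in> prox_step_set f g Dg Dh1 C \<alpha> x z" for x z \<alpha> xh
  proof -
    have "x \<in> N" using that \<open>0 < \<rho>\<close> by auto
    have "4 * \<alpha> * V \<le> \<rho>" "8 * \<alpha> * P \<le> \<rho>^2" "2 * \<alpha> * Q \<le> 1"
      using \<open>\<alpha> \<le> a\<sigma>\<close> \<open>0 < V\<close> \<open>0 < P\<close> \<open>0 < Q\<close>
      by (auto simp: a\<sigma>_def le_divide_eq mult.commute mult.left_commute)
    then have "norm (xh - x) \<le> \<rho>"
      using prox_step_short[OF f_nonneg \<open>x \<in> C\<close> quotient_bounds(1)[OF \<open>x \<in> N\<close>] prox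
          quotient_bounds(4)[OF \<open>x \<in> N\<close>] prox_direction_norm_le[OF that(2) \<open>0 < \<rho>\<close> that(3)]]
        \<open>0 < \<alpha>\<close> \<open>0 < \<rho>\<close>
      by (simp add: V_def P_def)
    then show ?thesis
      using step_accepted_of_short_step[OF that(1,3) prox _ that(2) \<open>0 < \<rho>\<close> \<open>0 < \<alpha>\<close>]
        \<open>2 * \<alpha> * Q \<le> 1\<close>
      by (simp add: Q_def)
  qed
  ultimately show ?thesis by (auto simp: accepts_steps_upto_def intro!: exI[of _ a\<sigma>])
qed

end

lemma uniform_step_acceptance:
  fixes f g h1 h2 :: "'a::euclidean_space \<Rightarrow> real" and Dg Dh1 :: "'a \<Rightarrow> 'a"
  assumes f_nonneg: "\<forall>x. f x \<ge> 0" and g_nonneg: "\<forall>x. g x \<ge> 0"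
    and f_convex: "convex_on UNIV f"
    and g_grad: "\<forall>x. (g has_derivative (\<lambda>v. inner (Dg x) v)) (at x)"
    and Dg_lip: "loc_lipschitz Dg"
    and h1_grad: "\<forall>x. (h1 has_derivative (\<lambda>v. inner (Dh1 x) v)) (at x)"
    and Dh1_lip: "loc_lipschitz Dh1"
    and h2_convex: "convex_on UNIV h2"
    and "0 \<le> \<sigma>" and "compact K" and K_dom: "K \<subseteq> {x. objF f g h1 h2 C x < \<infinity>}"
  shows "\<exists>a\<sigma>>0. \<forall>x \<in> K. accepts_steps_upto f g h1 h2 Dg Dh1 C \<sigma> a\<sigma> x"
proof -
  have K: "x \<in> C" "0 < g x" if "x \<in> K" for x
    using K_dom that g_nonneg by (auto simp: objF_neq_infinity_iff order_less_le)
  have "continuous_on UNIV g"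
    using g_grad by (meson continuous_at_imp_continuous_on has_derivative_continuous)
  moreover have "\<forall>x\<in>K. 0 < g x" using K(2) by blast
  ultimately obtain \<gamma> e where "0 < \<gamma>" "0 < e"
    and g_lower': "\<And>u. u \<in> (\<Union>x\<in>K. cball x e) \<Longrightarrow> \<gamma> \<le> g u"
    using uniformly_positive_near_compact[OF _ \<open>compact K\<close>] by blast
  define N where "N = (\<Union>x\<in>K. cball x e)"
  have "compact N" unfolding N_def by (rule compact_minkowski_sum_cball[OF \<open>compact K\<close>])
  have g_lower: "\<And>u. u \<in> N \<Longrightarrow> \<gamma> \<le> g u" using g_lower' by (simp add: N_def)
  have "continuous_on N (\<lambda>u. \<bar>f u\<bar> + \<bar>h2 u\<bar> + norm (Dh1 u) + norm (Dg u))"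
    using convex_on_continuous[OF open_UNIV f_convex] convex_on_continuous[OF open_UNIV h2_convex]
      loc_lipschitz_imp_continuous_on[OF Dh1_lip] loc_lipschitz_imp_continuous_on[OF Dg_lip]
    by (intro continuous_intros) (auto intro: continuous_on_subset)
  then obtain B where "0 \<le> B"
    and B: "\<And>u. u \<in> N \<Longrightarrow> norm (\<bar>f u\<bar> + \<bar>h2 u\<bar> + norm (Dh1 u) + norm (Dg u)) \<le> B"
    using continuous_on_compact_bound[OF \<open>compact N\<close>] by blast
  have "0 < B + 1" using \<open>0 \<le> B\<close> by simp
  have bounds: "\<bar>f u\<bar> \<le> B + 1" "\<bar>h2 u\<bar> \<le> B + 1" "norm (Dh1 u) \<le> B + 1" "norm (Dg u) \<le> B + 1"
    if "u \<in> N" for u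
  proof -
    have "\<bar>f u\<bar> + \<bar>h2 u\<bar> + norm (Dh1 u) + norm (Dg u) \<le> B" using B[OF that] by simp
    then show "\<bar>f u\<bar> \<le> B + 1" "\<bar>h2 u\<bar> \<le> B + 1" "norm (Dh1 u) \<le> B + 1" "norm (Dg u) \<le> B + 1"
      using abs_ge_zero[of "f u"] abs_ge_zero[of "h2 u"] norm_ge_zero[of "Dh1 u"] norm_ge_zero[of "Dg u"]
      by linarith+
  qed
  obtain L1 where "L1-lipschitz_on N Dh1"
    using loc_lipschitz_imp_lipschitz_on_compact[OF Dh1_lip \<open>compact N\<close>] by blast
  obtain L2 where "L2-lipschitz_on N Dg"
    using loc_lipschitz_imp_lipschitz_on_compact[OF Dg_lip \<open>compact N\<close>] by blast
  have lipschitz: "(max L1 L2)-lipschitz_on N Dh1" "(max L1 L2)-lipschitz_on N Dg"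
    using \<open>L1-lipschitz_on N Dh1\<close> \<open>L2-lipschitz_on N Dg\<close> by (auto intro: lipschitz_on_mono)
  interpret fractional_data_bounded_on f g h1 h2 Dg Dh1 N "B + 1" \<gamma> "max L1 L2"
    by unfold_locales
      (fact f_nonneg f_convex g_grad h1_grad \<open>0 < B + 1\<close> \<open>0 < \<gamma>\<close> bounds g_lower lipschitz)+
  have "0 < e / 2" using \<open>0 < e\<close> by simp
  then obtain a\<sigma> where "0 < a\<sigma>" and accept:
      "\<forall>x \<in> C. cball x (2 * (e / 2)) \<subseteq> N \<longrightarrow> accepts_steps_upto f g h1 h2 Dg Dh1 C \<sigma> a\<sigma> x"
    using uniform_step_acceptance_of_bounds[OF \<open>0 \<le> \<sigma>\<close>] by blast
  moreover have "cball x (2 * (e / 2)) \<subseteq> N" if "x \<in> K" for x using that by (auto simp: N_def)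
  ultimately show ?thesis using K(1) by blast
qed

lemma linesearch_step:
  assumes accept: "accepts_steps_upto f g h1 h2 Dg Dh1 C \<sigma> a\<sigma> x" and "x \<in> C"
    and z: "z \<in> conv_subdiff h2 x" and prox: "\<And>m. xh m \<in> prox_step_set f g Dg Dh1 C (a * r ^ m) x z"
    and "0 < a\<sigma>" "0 < alo" "alo \<le> a" "0 < r" "r < 1"
  defines "m\<^sub>0 \<equiv> LEAST m. step_accepted f g h1 h2 C \<sigma> x z (xh m)"
  shows "\<exists>m. step_accepted f g h1 h2 C \<sigma> x z (xh m)" and "min alo a\<sigma> * r \<le> a * r ^ m\<^sub>0"
    and "objF f g h1 h2 C (xh m\<^sub>0) + ereal (\<sigma> / 2 * (norm (xh m\<^sub>0 - x))^2) \<le> objF f g h1 h2 C x"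
proof -
  have small_steps_accepted: "step_accepted f g h1 h2 C \<sigma> x z (xh m)" if "a * r ^ m \<le> a\<sigma>" for m
  proof -
    have "0 < a * r ^ m" using \<open>0 < alo\<close> \<open>alo \<le> a\<close> \<open>0 < r\<close> by simp
    then show ?thesis using accept z that prox by (auto simp: accepts_steps_upto_def)
  qed
  note found = backtracking_terminates[where P = "\<lambda>m. step_accepted f g h1 h2 C \<sigma> x z (xh m)",
      OF small_steps_accepted \<open>0 < alo\<close> \<open>alo \<le> a\<close> \<open>0 < a\<sigma>\<close> \<open>0 < r\<close> \<open>r < 1\<close>]
  show "\<exists>m. step_accepted f g h1 h2 C \<sigma> x z (xh m)" "min alo a\<sigma> * r \<le> a * r ^ m\<^sub>0"
    using found unfolding m\<^sub>0_def by blast+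
  have "xh m\<^sub>0 \<in> C" using prox_set_indic_ineq(1)[OF prox[unfolded prox_step_set_def] \<open>x \<in> C\<close>] .
  have "step_accepted f g h1 h2 C \<sigma> x z (xh m\<^sub>0)" unfolding m\<^sub>0_def using found(1) by (rule LeastI_ex)
  then have "g (xh m\<^sub>0) \<noteq> 0" and accepted: "funH f g h1 h2 C (xh m\<^sub>0) z (f (xh m\<^sub>0) / g (xh m\<^sub>0))
      + ereal (\<sigma> / 2 * (norm (xh m\<^sub>0 - x))^2) \<le> objF f g h1 h2 C x"
    by (simp_all add: step_accepted_def)
  then show "objF f g h1 h2 C (xh m\<^sub>0) + ereal (\<sigma> / 2 * (norm (xh m\<^sub>0 - x))^2) \<le> objF f g h1 h2 C x"
    using objF_le_funH[of "xh m\<^sub>0" C g f h1 h2 z] \<open>xh m\<^sub>0 \<in> C\<close> by (meson add_right_mono order_trans)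
qed

lemma linesearch_iterates_descend:
  fixes f g h1 h2 :: "'a::real_inner \<Rightarrow> real" and C :: "'a set" and x0 :: 'a
    and x z :: "nat \<Rightarrow> 'a" and xh :: "nat \<Rightarrow> nat \<Rightarrow> 'a" and alt :: "nat \<Rightarrow> real"
  defines "K \<equiv> {x. objF f g h1 h2 C x < \<infinity> \<and> objF f g h1 h2 C x \<le> objF f g h1 h2 C x0}"
  assumes accept: "\<forall>x \<in> K. accepts_steps_upto f g h1 h2 Dg Dh1 C \<sigma> a\<sigma> x"
    and "0 < a\<sigma>" "0 < alo" "0 < r" "r < 1" "0 \<le> \<sigma>" "objF f g h1 h2 C x0 < \<infinity>"
    and "x 0 = x0"
    and iter: "\<forall>k. z k \<in> conv_subdiff h2 (x k) \<and> alt k \<in> {alo..ahi}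
      \<and> (\<forall>m. xh k m \<in> prox_step_set f g Dg Dh1 C (alt k * r ^ m) (x k) (z k))
      \<and> x (Suc k) = xh k (LEAST m. step_accepted f g h1 h2 C \<sigma> (x k) (z k) (xh k m))"
  shows "\<forall>k. (\<exists>m. step_accepted f g h1 h2 C \<sigma> (x k) (z k) (xh k m))
      \<and> alt k * r ^ (LEAST m. step_accepted f g h1 h2 C \<sigma> (x k) (z k) (xh k m)) \<ge> min alo a\<sigma> * r
      \<and> x k \<in> K
      \<and> objF f g h1 h2 C (x (Suc k)) + ereal (\<sigma> / 2 * (norm (x (Suc k) - x k))^2)
          \<le> objF f g h1 h2 C (x k)"
proof -
  let ?F = "objF f g h1 h2 C"
  let ?accepted = "\<lambda>k m. step_accepted f g h1 h2 C \<sigma> (x k) (z k) (xh k m)"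
  have step: "(\<exists>m. ?accepted k m) \<and> min alo a\<sigma> * r \<le> alt k * r ^ (LEAST m. ?accepted k m)
      \<and> ?F (x (Suc k)) + ereal (\<sigma> / 2 * (norm (x (Suc k) - x k))^2) \<le> ?F (x k)"
    if "x k \<in> K" for k
  proof -
    have xC: "x k \<in> C" using that by (simp add: K_def objF_neq_infinity_iff)
    have acc: "accepts_steps_upto f g h1 h2 Dg Dh1 C \<sigma> a\<sigma> (x k)" using accept that by blast
    have z: "z k \<in> conv_subdiff h2 (x k)" and "alo \<le> alt k"
      and prox: "\<And>m. xh k m \<in> prox_step_set f g Dg Dh1 C (alt k * r ^ m) (x k) (z k)"
      and next_iterate: "x (Suc k) = xh k (LEAST m. ?accepted k m)"
      using iter by simp_all
    show ?thesis
      using linesearch_step[OF acc xC z prox \<open>0 < a\<sigma>\<close> \<open>0 < alo\<close> \<open>alo \<le> alt k\<close> \<open>0 < r\<close> \<open>r < 1\<close>]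
      unfolding next_iterate by blast
  qed
  have "x k \<in> K" for k
  proof (induction k)
    case 0 show ?case using \<open>x 0 = x0\<close> \<open>?F x0 < \<infinity>\<close> by (simp add: K_def)
  next
    case (Suc k)
    have "?F (x (Suc k)) \<le> ?F (x (Suc k)) + ereal (\<sigma> / 2 * (norm (x (Suc k) - x k))^2)"
      using \<open>0 \<le> \<sigma>\<close> by (simp add: ereal_le_add_self)
    also have "\<dots> \<le> ?F (x k)" using step[OF Suc] by blast
    finally show ?case using Suc by (auto simp: K_def)
  qed
  then show ?thesis using step by blast
qed

theorem proposition4p2:
  fixes f g h1 h2 :: "real^'n \<Rightarrow> real"
    and Dg Dh1 :: "real^'n \<Rightarrow> real^'n"
    and C :: "(real^'n) set"
    and x0 :: "real^'n"
    and alo ahi \<sigma> r :: real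
  assumes f_nonneg: "\<forall>x. f x \<ge> 0"
    and g_nonneg: "\<forall>x. g x \<ge> 0"
    and C_closed: "closed C" and C_convex: "convex C"
    and C_Omega: "C \<inter> {x. g x \<noteq> 0} \<noteq> {}"
    and f_convex: "convex_on UNIV f"
    and g_grad: "\<forall>x. (g has_derivative (\<lambda>v. inner (Dg x) v)) (at x)"
    and Dg_lip: "loc_lipschitz Dg"
    and h1_grad: "\<forall>x. (h1 has_derivative (\<lambda>v. inner (Dh1 x) v)) (at x)"
    and Dh1_lip: "loc_lipschitz Dh1"
    and h2_convex: "convex_on UNIV h2"
    and x0_dom: "objF f g h1 h2 C x0 < \<infinity>"
    and params: "0 < alo" "alo < ahi" "\<sigma> > 0" "0 < r" "r < 1"
    and X0_compact: "compact {x. objF f g h1 h2 C x < \<infinity> \<and> objF f g h1 h2 C x \<le> objF f g h1 h2 C x0}"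
  shows "\<exists>a\<sigma>>0. \<forall>(x :: nat \<Rightarrow> real^'n) (z :: nat \<Rightarrow> real^'n) (alt :: nat \<Rightarrow> real)
            (xh :: nat \<Rightarrow> nat \<Rightarrow> real^'n).
     (let c = (\<lambda>k. f (x k) / g (x k));
          accept = (\<lambda>k m. g (xh k m) \<noteq> 0 \<and>
             funH f g h1 h2 C (xh k m) (z k) (f (xh k m) / g (xh k m))
               + ereal (\<sigma> / 2 * (norm (xh k m - x k))^2) \<le> objF f g h1 h2 C (x k))
      in
      (x 0 = x0 \<and>
       (\<forall>k. z k \<in> conv_subdiff h2 (x k) \<and> alt k \<in> {alo..ahi}
          \<and> (\<forall>m. xh k m \<in> prox_set
                 (\<lambda>u. ereal (2 * (alt k * r ^ m) * c k * f u) + indic C u)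
                 (x k - (alt k * r ^ m) *\<^sub>R (Dh1 (x k) - (c k)^2 *\<^sub>R Dg (x k) - z k)))
          \<and> x (Suc k) = xh k (LEAST m. accept k m)))
      \<longrightarrow>
      (\<forall>k. (\<exists>m. accept k m)
          \<and> alt k * r ^ (LEAST m. accept k m) \<ge> min alo a\<sigma> * r
          \<and> x k \<in> {x. objF f g h1 h2 C x < \<infinity> \<and> objF f g h1 h2 C x \<le> objF f g h1 h2 C x0}
          \<and> objF f g h1 h2 C (x (Suc k)) + ereal (\<sigma> / 2 * (norm (x (Suc k) - x k))^2)
              \<le> objF f g h1 h2 C (x k))
      \<and> {x. objF f g h1 h2 C x < \<infinity> \<and> objF f g h1 h2 C x \<le> objF f g h1 h2 C x0}
          \<subseteq> {x. g x \<noteq> 0} \<inter> C)"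
proof -
  define K where "K = {x. objF f g h1 h2 C x < \<infinity> \<and> objF f g h1 h2 C x \<le> objF f g h1 h2 C x0}"
  have "compact K" "K \<subseteq> {x. objF f g h1 h2 C x < \<infinity>}" using X0_compact by (auto simp: K_def)
  then obtain a\<sigma> where "0 < a\<sigma>" and accept: "\<forall>x \<in> K. accepts_steps_upto f g h1 h2 Dg Dh1 C \<sigma> a\<sigma> x"
    using uniform_step_acceptance[OF f_nonneg g_nonneg f_convex g_grad Dg_lip h1_grad Dh1_lip h2_convex]
      params(3) by (meson less_imp_le)
  have "K \<subseteq> {x. g x \<noteq> 0} \<inter> C" by (auto simp: K_def objF_neq_infinity_iff)
  moreover note linesearch_iterates_descend[OF accept[unfolded K_def] \<open>0 < a\<sigma>\<close> params(1,4,5)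
      less_imp_le[OF params(3)] x0_dom, unfolded prox_step_set_def step_accepted_def]
  ultimately show ?thesis
    using \<open>0 < a\<sigma>\<close> unfolding Let_def K_def by blast
qed

end
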